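(* Let $k\ge2$ be an integer and $m,n\in\mathbb Z$. Then $L_k^{(m)}L_k^{(n)}=L_k^{(m+n)}L_k^{(0)}=L_k^{(n)}L_k^{(m)}$.
   Context: Fix an integer $k\ge2$. Let $Q_k$ be the $k\times k$ matrix whose first row is all ones, with $(Q_k)_{i+1,i}=1$ for $1\le i\le k-1$ and all other entries $0$, and for $r\in\mathbb Z$ let $Q_k^r$ denote its $r$-th power. The generalized Lucas sequence of order $k$, $(l_{k,n})_{n\in\mathbb Z}$, is the two-sided sequence satisfying $l_{k,n+k}=l_{k,n+k-1}+\dots+l_{k,n}$ for all $n\in\mathbb Z$ with initial values $l_{k,r}=\operatorname{trace}(Q_k^r)$ for $0\le r\le k-1$ (so $l_{k,0}=k$ and $l_{k,r}=2^r-1$ for $1\le r\le k-1$). For $n\in\mathbb Z$ the generalized Lucas matrix $L_k^{(n)}$ is the $k\times k$ matrix with entries $(L_k^{(n)})_{i,1}=l_{k,k+n-i}$ and $(L_k^{(n)})_{i,j}=\sum_{m=n-i+j-1}^{k+n-i-1} l_{k,m}$ for $2\le j\le k$, $1\le i\le k$. *)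

theory Defs
  imports "Jordan_Normal_Form.Matrix"
begin

text \<open>Two-sided generalized Lucas sequence of order k:
  initial values l 0 = k, l r = 2^r - 1 for 1 <= r <= k-1,
  (k = 0 is a degenerate dummy case, never used since k >= 2);
  extended forwards by l n = l(n-1) + ... + l(n-k) (n >= k) and
  backwards by l n = l(n+k) - l(n+k-1) - ... - l(n+1) (n < 0).\<close>

function gen_lucas :: "nat \<Rightarrow> int \<Rightarrow> int" where
  "gen_lucas k n =
     (if k = 0 then 0
      else if 0 \<le> n \<and> n < int k then (if n = 0 then int k else 2 ^ nat n - 1)
      else if int k \<le> n then (\<Sum>j\<in>{1..int k}. gen_lucas k (n - j))
      else gen_lucas k (n + int k) - (\<Sum>j\<in>{1..int k - 1}. gen_lucas k (n + j)))"
  by pat_completeness auto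
termination
  by (relation "measure (\<lambda>(k, n). if 0 \<le> n then nat n else nat (- n) + k)") auto

text \<open>Generalized Lucas matrix L_k^(n) (0-indexed: row i0 = i-1, column j0 = j-1).\<close>
definition lucas_matrix :: "nat \<Rightarrow> int \<Rightarrow> int mat" where
  "lucas_matrix k n = mat k k (\<lambda>(i, j).
     if j = 0 then gen_lucas k (int k + n - int i - 1)
     else (\<Sum>m\<in>{n - int i + int j - 1 .. int k + n - int i - 2}. gen_lucas k m))"

end

theory Submission
  imports Defs
begin

(* Both multiplying on the left and on the right by Q_k shift the index of a Lucas matrix:
   Q_k L_k^(n) = L_k^(n+1) = L_k^(n) Q_k. Hence L_k^(x+1) L_k^(s-x-1) = L_k^(x) Q_k L_k^(s-x-1)
   = L_k^(x) L_k^(s-x), so the product L_k^(x) L_k^(s-x) does not depend on x; taking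
   x = m, n and m + n with s = m + n gives both identities. *)

declare gen_lucas.simps [simp del]

lemma gen_lucas_rec:
  assumes "k > 0"
  shows "gen_lucas k t = (\<Sum>j\<in>{1..int k}. gen_lucas k (t - j))"
proof (cases "t \<ge> int k")
  case True
  then show ?thesis using assms by (subst gen_lucas.simps) simp
next
  case False
  (* for t < k the recurrence is the backward defining equation of l (t - k) *)
  have backward: "gen_lucas k (t - int k)
      = gen_lucas k t - (\<Sum>j\<in>{1..int k - 1}. gen_lucas k (t - int k + j))"
    using assms False by (subst gen_lucas.simps) simp
  have "(\<Sum>j\<in>{1..int k - 1}. gen_lucas k (t - int k + j)) = (\<Sum>j\<in>{1..int k - 1}. gen_lucas k (t - j))"
    by (rule sum.reindex_bij_witness[of _ "\<lambda>j. int k - j" "\<lambda>j. int k - j"]) (auto simp: algebra_simps)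
  moreover have "{1..int k} = insert (int k) {1..int k - 1}"
    using assms by auto
  ultimately show ?thesis
    using backward by simp
qed

lemma gen_lucas_sum_interval:
  assumes "k > 0"
  shows "(\<Sum>m\<in>{n - int k..n - 1}. gen_lucas k m) = gen_lucas k n"
proof -
  have "(\<Sum>m\<in>{n - int k..n - 1}. gen_lucas k m) = (\<Sum>j\<in>{1..int k}. gen_lucas k (n - j))"
    by (rule sum.reindex_bij_witness[of _ "\<lambda>j. n - j" "\<lambda>m. n - m"]) auto
  also have "\<dots> = gen_lucas k n"
    using gen_lucas_rec[OF assms, of n] by simp
  finally show ?thesis .
qed

lemma gen_lucas_sum_lessThan:
  assumes "k > 0"
  shows "(\<Sum>t<k. gen_lucas k (n - int t)) = gen_lucas k (n + 1)"
proof -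
  have "(\<Sum>t<k. gen_lucas k (n - int t)) = (\<Sum>m\<in>{n + 1 - int k..n}. gen_lucas k m)"
    by (rule sum.reindex_bij_witness[of _ "\<lambda>m. nat (n - m)" "\<lambda>t. n - int t"]) auto
  then show ?thesis
    using gen_lucas_sum_interval[OF assms, of "n + 1"] by simp
qed

lemma sum_int_interval_shift:
  "(\<Sum>m\<in>{a + c..b + c}. f m) = (\<Sum>s\<in>{a..b::int}. f (s + c))"
  by (rule sum.reindex_bij_witness[of _ "\<lambda>s. s + c" "\<lambda>m. m - c"]) auto

definition lucas_entry :: "nat \<Rightarrow> int \<Rightarrow> nat \<Rightarrow> int" where
  "lucas_entry k p j =
     (if j = 0 then gen_lucas k (int k + p - 1)
      else (\<Sum>m\<in>{p + int j - 1..int k + p - 2}. gen_lucas k m))"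

lemma lucas_matrix_carrier [simp]:
  "lucas_matrix k n \<in> carrier_mat k k" "dim_row (lucas_matrix k n) = k" "dim_col (lucas_matrix k n) = k"
  by (simp_all add: lucas_matrix_def)

lemma lucas_matrix_index:
  "i < k \<Longrightarrow> j < k \<Longrightarrow> lucas_matrix k n $$ (i, j) = lucas_entry k (n - int i) j"
  by (simp add: lucas_matrix_def lucas_entry_def algebra_simps)

lemma lucas_entry_sum_rows:
  assumes "k > 0"
  shows "(\<Sum>t<k. lucas_entry k (p - int t) j) = lucas_entry k (p + 1) j"
proof (cases "j = 0")
  case True
  then show ?thesis
    using gen_lucas_sum_lessThan[OF assms, of "int k + p - 1"] by (simp add: lucas_entry_def algebra_simps)
next
  case False
  let ?S = "{int j - 1..int k - 2}"
  have entry: "lucas_entry k q j = (\<Sum>s\<in>?S. gen_lucas k (s + q))" for q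
  proof -
    have "(\<Sum>s\<in>?S. gen_lucas k (s + q)) = sum (gen_lucas k) {int j - 1 + q..int k - 2 + q}"
      by (rule sum_int_interval_shift[symmetric])
    also have "{int j - 1 + q..int k - 2 + q} = {q + int j - 1..int k + q - 2}"
      by auto
    finally show ?thesis
      using False by (simp add: lucas_entry_def)
  qed
  have "(\<Sum>t<k. lucas_entry k (p - int t) j) = (\<Sum>s\<in>?S. \<Sum>t<k. gen_lucas k (s + p - int t))"
    unfolding entry by (subst sum.swap) (simp add: algebra_simps)
  also have "\<dots> = (\<Sum>s\<in>?S. gen_lucas k (s + (p + 1)))"
  proof (rule sum.cong[OF refl])
    fix s
    show "(\<Sum>t<k. gen_lucas k (s + p - int t)) = gen_lucas k (s + (p + 1))"
      using gen_lucas_sum_lessThan[OF assms, of "s + p"] by (simp add: add.assoc)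
  qed
  finally show ?thesis
    by (simp add: entry)
qed

lemma lucas_entry_column_step:
  assumes "j + 1 < k"
  shows "lucas_entry k p 0 + lucas_entry k p (j + 1) = lucas_entry k (p + 1) j"
proof -
  have "{p + int j..int k + p - 1} = insert (int k + p - 1) {p + int j..int k + p - 2}"
    using assms by auto
  then have "lucas_entry k p 0 + lucas_entry k p (j + 1) = (\<Sum>m\<in>{p + int j..int k + p - 1}. gen_lucas k m)"
    by (simp add: lucas_entry_def)
  also have "\<dots> = lucas_entry k (p + 1) j"
  proof (cases "j = 0")
    case True
    then show ?thesis
      using assms gen_lucas_sum_interval[of k "int k + p"] by (simp add: lucas_entry_def algebra_simps)
  next
    case False
    then show ?thesis
      by (simp add: lucas_entry_def algebra_simps)
  qed
  finally show ?thesis .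
qed

lemma lucas_entry_last_column:
  assumes "k \<ge> 2"
  shows "lucas_entry k (p + 1) (k - 1) = lucas_entry k p 0"
  using assms by (simp add: lucas_entry_def algebra_simps)

definition q_matrix :: "nat \<Rightarrow> 'a :: {zero, one} mat" where
  "q_matrix k = mat k k (\<lambda>(i, j). if i = 0 \<or> i = j + 1 then 1 else 0)"

lemma q_matrix_carrier [simp]:
  "q_matrix k \<in> carrier_mat k k" "dim_row (q_matrix k) = k" "dim_col (q_matrix k) = k"
  by (simp_all add: q_matrix_def)

lemma q_matrix_mult_index:
  fixes A :: "'a :: semiring_1 mat"
  assumes "A \<in> carrier_mat k k" "i < k" "j < k"
  shows "(q_matrix k * A) $$ (i, j) = (if i = 0 then (\<Sum>t<k. A $$ (t, j)) else A $$ (i - 1, j))"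
proof -
  have entry: "(q_matrix k * A) $$ (i, j) = (\<Sum>t<k. (if i = 0 \<or> i = t + 1 then 1 else 0) * A $$ (t, j))"
    using assms by (simp add: q_matrix_def scalar_prod_def lessThan_atLeast0)
  show ?thesis
  proof (cases "i = 0")
    case True
    then show ?thesis
      unfolding entry by simp
  next
    case False
    then have "(\<Sum>t<k. (if i = 0 \<or> i = t + 1 then 1 else 0) * A $$ (t, j))
        = (\<Sum>t<k. if t = i - 1 then A $$ (t, j) else 0)"
      by (intro sum.cong) auto
    then show ?thesis
      unfolding entry using False assms(2) by auto
  qed
qed

lemma mult_q_matrix_index:
  fixes A :: "'a :: semiring_1 mat"
  assumes "A \<in> carrier_mat k k" "i < k" "j < k"
  shows "(A * q_matrix k) $$ (i, j) = A $$ (i, 0) + (if j + 1 < k then A $$ (i, j + 1) else 0)"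
proof -
  have "(A * q_matrix k) $$ (i, j) = (\<Sum>t<k. A $$ (i, t) * (if t = 0 \<or> t = j + 1 then 1 else 0))"
    using assms by (simp add: q_matrix_def scalar_prod_def lessThan_atLeast0)
  also have "\<dots> = (\<Sum>t<k. (if t = 0 then A $$ (i, t) else 0) + (if t = j + 1 then A $$ (i, t) else 0))"
    by (rule sum.cong) auto
  also have "\<dots> = A $$ (i, 0) + (if j + 1 < k then A $$ (i, j + 1) else 0)"
    using assms by (simp add: sum.distrib)
  finally show ?thesis .
qed

lemma q_matrix_mult_lucas_matrix:
  assumes "k > 0"
  shows "q_matrix k * lucas_matrix k n = lucas_matrix k (n + 1)"
proof (rule eq_matI)
  fix i j
  assume "i < dim_row (lucas_matrix k (n + 1))" "j < dim_col (lucas_matrix k (n + 1))"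
  then have ij: "i < k" "j < k"
    by simp_all
  show "(q_matrix k * lucas_matrix k n) $$ (i, j) = lucas_matrix k (n + 1) $$ (i, j)"
  proof (cases "i = 0")
    case True
    then show ?thesis
      using assms ij lucas_entry_sum_rows[of k n j]
      by (simp add: q_matrix_mult_index lucas_matrix_index del: index_mult_mat)
  next
    case False
    then show ?thesis
      using ij by (simp add: q_matrix_mult_index lucas_matrix_index algebra_simps del: index_mult_mat)
  qed
qed simp_all

lemma lucas_matrix_mult_q_matrix:
  assumes "k \<ge> 2"
  shows "lucas_matrix k n * q_matrix k = lucas_matrix k (n + 1)"
proof (rule eq_matI)
  fix i j
  assume "i < dim_row (lucas_matrix k (n + 1))" "j < dim_col (lucas_matrix k (n + 1))"
  then have ij: "i < k" "j < k"
    by simp_all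
  show "(lucas_matrix k n * q_matrix k) $$ (i, j) = lucas_matrix k (n + 1) $$ (i, j)"
  proof (cases "j + 1 < k")
    case True
    then show ?thesis
      using ij lucas_entry_column_step[of j k "n - int i"]
      by (simp add: mult_q_matrix_index lucas_matrix_index algebra_simps del: index_mult_mat)
  next
    case False
    then have "j = k - 1"
      using ij by simp
    then show ?thesis
      using assms ij False lucas_entry_last_column[of k "n - int i"]
      by (simp add: mult_q_matrix_index lucas_matrix_index algebra_simps del: index_mult_mat)
  qed
qed simp_all

lemma int_shift_invariant_const:
  fixes f :: "int \<Rightarrow> 'a"
  assumes "\<And>x. f (x + 1) = f x"
  shows "f x = f y"
proof -
  have "f x = f 0" for x
  proof (induction x rule: int_induct[where k = 0])
    case (step2 i)
    then show ?case
      using assms[of "i - 1"] by simp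
  qed (simp_all add: assms)
  then show ?thesis
    by metis
qed

lemma shift_sequence_mult_mat:
  fixes A :: "int \<Rightarrow> 'a :: semiring_1 mat"
  assumes carrier: "\<And>n. A n \<in> carrier_mat k k" "Q \<in> carrier_mat k k"
    and left: "\<And>n. Q * A n = A (n + 1)"
    and right: "\<And>n. A n * Q = A (n + 1)"
  shows "A m * A n = A (m + n) * A 0"
proof -
  have step: "A (x + 1) * A (s - (x + 1)) = A x * A (s - x)" for x s
  proof -
    have "A (x + 1) * A (s - (x + 1)) = A x * Q * A (s - (x + 1))"
      by (simp add: right)
    also have "\<dots> = A x * (Q * A (s - (x + 1)))"
      by (rule assoc_mult_mat[OF carrier(1) carrier(2) carrier(1)])
    also have "\<dots> = A x * A (s - x)"
      using left[of "s - (x + 1)"] by simp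
    finally show ?thesis .
  qed
  have "A x * A (s - x) = A y * A (s - y)" for x y s
    using int_shift_invariant_const[of "\<lambda>x. A x * A (s - x)"] step by blast
  from this[of m "m + n" "m + n"] show ?thesis
    by simp
qed

theorem theorem5:
  fixes k :: nat and m n :: int
  assumes "k \<ge> 2"
  shows "lucas_matrix k m * lucas_matrix k n = lucas_matrix k (m + n) * lucas_matrix k 0
       \<and> lucas_matrix k (m + n) * lucas_matrix k 0 = lucas_matrix k n * lucas_matrix k m"
proof -
  have "k > 0"
    using assms by simp
  then have "lucas_matrix k a * lucas_matrix k b = lucas_matrix k (a + b) * lucas_matrix k 0" for a b
    by (intro shift_sequence_mult_mat[where Q = "q_matrix k" and k = k])
      (simp_all add: q_matrix_mult_lucas_matrix lucas_matrix_mult_q_matrix assms)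
  from this[of m n] this[of n m] show ?thesis
    by (simp add: add.commute)
qed

end
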